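(* Assume $p=0.5$ and $e_{-1}+e_{+1}<1$. Let $\mathcal F$ be a class of measurable classifiers $f:\mathcal X\to\{-1,+1\}$, and let $\tilde f^*\in\arg\min_{f\in\mathcal F}\mathbb E_{\tilde{\mathcal D}}[\mathbb 1_{\mathrm{peer}}(f(X),\tilde Y)]$. Then $\tilde f^*\in\arg\min_{f\in\mathcal F}R_{\mathcal D}(f)$, where $R_{\mathcal D}(f)=\mathbb P_{(X,Y)\sim\mathcal D}(f(X)\neq Y)$.
   Context: Let $\mathcal X\subseteq\mathbb R^d$ and let $(X,Y)$ be a random pair with distribution $\mathcal D$ on $\mathcal X\times\{-1,+1\}$, with $p:=\mathbb P(Y=+1)$. A noisy label $\tilde Y\in\{-1,+1\}$ is generated with noise rates $e_{+1}:=\mathbb P(\tilde Y=-1\mid Y=+1)$, $e_{-1}:=\mathbb P(\tilde Y=+1\mid Y=-1)$, where $\tilde Y$ is conditionally independent of $X$ given $Y$; $\tilde{\mathcal D}$ is the distribution of $(X,\tilde Y)$. The 0-1 loss is $\mathbb 1(a,b)=1$ if $a\neq b$ and $0$ otherwise. The expected 0-1 peer loss of $f$ on $\tilde{\mathcal D}$ is $$\mathbb E_{\tilde{\mathcal D}}[\mathbb 1_{\mathrm{peer}}(f(X),\tilde Y)]:=\mathbb E[\mathbb 1(f(X),\tilde Y)]-\mathbb E[\mathbb 1(f(X_1),\tilde Y_2)],$$ where $(X,\tilde Y),(X_1,\tilde Y_1),(X_2,\tilde Y_2)$ are i.i.d. draws from $\tilde{\mathcal D}$. *)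

theory Defs
  imports "HOL-Probability.Probability"
begin

text \<open>Labels are encoded as integers in {-1, +1}.\<close>

definition zero_one_loss :: "int \<Rightarrow> int \<Rightarrow> real" where
  "zero_one_loss a b = (if a \<noteq> b then 1 else 0)"

text \<open>Ytil is conditionally independent of X given the discrete label Y
  (for every Borel set A and all labels y, t).\<close>
definition cond_indep_label ::
  "'s measure \<Rightarrow> ('s \<Rightarrow> 'a::topological_space) \<Rightarrow> ('s \<Rightarrow> int) \<Rightarrow> ('s \<Rightarrow> int) \<Rightarrow> bool" where
  "cond_indep_label M X Y Yt \<longleftrightarrow>
     (\<forall>A\<in>sets borel. \<forall>y t.
        measure M {w\<in>space M. X w \<in> A \<and> Y w = y \<and> Yt w = t} * measure M {w\<in>space M. Y w = y}
      = measure M {w\<in>space M. X w \<in> A \<and> Y w = y} * measure M {w\<in>space M. Y w = y \<and> Yt w = t})"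

text \<open>Noise rates e_{+1} = P(Ytil=-1 | Y=+1) and e_{-1} = P(Ytil=+1 | Y=-1).\<close>
definition noise_pos :: "'s measure \<Rightarrow> ('s \<Rightarrow> int) \<Rightarrow> ('s \<Rightarrow> int) \<Rightarrow> real" where
  "noise_pos M Y Yt = measure M {w\<in>space M. Y w = 1 \<and> Yt w = -1} / measure M {w\<in>space M. Y w = 1}"

definition noise_neg :: "'s measure \<Rightarrow> ('s \<Rightarrow> int) \<Rightarrow> ('s \<Rightarrow> int) \<Rightarrow> real" where
  "noise_neg M Y Yt = measure M {w\<in>space M. Y w = -1 \<and> Yt w = 1} / measure M {w\<in>space M. Y w = -1}"

text \<open>Expected 0-1 peer loss of f on a distribution Dt over (x, label):
  E[1(f(X),Ytil)] - E[1(f(X1),Ytil2)] with (X1,Ytil1),(X2,Ytil2) i.i.d. from Dt.\<close>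
definition peer_loss :: "('a \<times> int) measure \<Rightarrow> ('a \<Rightarrow> int) \<Rightarrow> real" where
  "peer_loss Dt f =
     (\<integral>z. zero_one_loss (f (fst z)) (snd z) \<partial>Dt)
     - (\<integral>zz. zero_one_loss (f (fst (fst zz))) (snd (snd zz)) \<partial>(Dt \<Otimes>\<^sub>M Dt))"

definition risk01 :: "('a \<times> int) measure \<Rightarrow> ('a \<Rightarrow> int) \<Rightarrow> real" where
  "risk01 D f = measure D {z\<in>space D. f (fst z) \<noteq> snd z}"

end

(*
  With labels in {-1, 1}, the expected peer loss of f is P(f(X) <> Yt) minus the chance that
  f(X) disagrees with the label of an independent sample, P(f(X) = 1) P(Yt = -1) + P(f(X) = -1) P(Yt = 1).
  Conditional independence of Yt and X given Y makes both terms affine in the class-wise errors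
  P(f(X) = -y, Y = y), with coefficients given by the noise rates. For balanced classes the
  constant parts cancel and the peer loss equals (1 - e_{-1} - e_{+1}) (R_D(f) - 1/2): a positive
  multiple of the clean risk up to an additive constant, so both have the same minimisers.
*)
theory Submission
  imports Defs
begin

lemma borel_measurable_zero_one_loss [measurable]:
  assumes "g \<in> N \<rightarrow>\<^sub>M count_space UNIV" and "h \<in> N \<rightarrow>\<^sub>M count_space UNIV"
  shows "(\<lambda>z. zero_one_loss (g z) (h z)) \<in> borel_measurable N"
  unfolding zero_one_loss_def using assms by measurable

lemma (in sigma_finite_measure) measure_pair_measure_Times:
  assumes "A \<in> sets N" and "B \<in> sets M"
  shows "measure (N \<Otimes>\<^sub>M M) (A \<times> B) = measure N A * measure M B"
  using emeasure_pair_measure_Times[OF assms] by (simp add: measure_def enn2real_mult)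

lemma noise_pos_eq_cond_prob: "noise_pos M Y Yt = \<P>(w in M. Yt w = -1 \<bar> Y w = 1)"
  by (simp add: noise_pos_def cond_prob_def conj_commute)

lemma noise_neg_eq_cond_prob: "noise_neg M Y Yt = \<P>(w in M. Yt w = 1 \<bar> Y w = -1)"
  by (simp add: noise_neg_def cond_prob_def conj_commute)

context prob_space
begin

lemma prob_split_binary:
  fixes L :: "'a \<Rightarrow> int"
  assumes "L \<in> M \<rightarrow>\<^sub>M count_space UNIV" and "\<forall>w\<in>space M. L w \<in> {-1, 1}"
    and "{w \<in> space M. P w} \<in> events" and "y \<in> {-1, 1}"
  shows "\<P>(w in M. P w) = \<P>(w in M. P w \<and> L w = y) + \<P>(w in M. P w \<and> L w = - y)"
proof -
  have L_events: "{w \<in> space M. P w \<and> L w = c} \<in> events" for c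
    using assms(1,3) by measurable
  have "{w \<in> space M. P w} = {w \<in> space M. P w \<and> L w = y} \<union> {w \<in> space M. P w \<and> L w = - y}"
    using assms(2,4) by auto
  moreover have "y \<noteq> - y"
    using assms(4) by auto
  ultimately show ?thesis
    by (auto intro!: finite_measure_Union L_events)
qed

lemma prob_binary_compl:
  fixes L :: "'a \<Rightarrow> int"
  assumes "L \<in> M \<rightarrow>\<^sub>M count_space UNIV" and "\<forall>w\<in>space M. L w \<in> {-1, 1}"
    and "y \<in> {-1, 1}"
  shows "\<P>(w in M. L w = - y) = 1 - \<P>(w in M. L w = y)"
  using prob_split_binary[OF assms(1,2) _ assms(3), of "\<lambda>_. True"] prob_space by simp

lemma prob_mult_cond_prob:
  assumes "{w \<in> space M. P w} \<in> events" and "{w \<in> space M. Q w} \<in> events"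
  shows "\<P>(w in M. Q w) * \<P>(w in M. P w \<bar> Q w) = \<P>(w in M. P w \<and> Q w)"
proof (cases "\<P>(w in M. Q w) = 0")
  case True
  have "\<P>(w in M. P w \<and> Q w) \<le> \<P>(w in M. Q w)"
    using assms by (intro finite_measure_mono) auto
  with True show ?thesis
    by (simp add: cond_prob_def measure_le_0_iff)
qed (simp add: cond_prob_def)

lemma cond_prob_binary_compl:
  fixes L :: "'a \<Rightarrow> int"
  assumes "L \<in> M \<rightarrow>\<^sub>M count_space UNIV" and "\<forall>w\<in>space M. L w \<in> {-1, 1}"
    and "{w \<in> space M. Q w} \<in> events" and "\<P>(w in M. Q w) \<noteq> 0" and "y \<in> {-1, 1}"
  shows "\<P>(w in M. L w = - y \<bar> Q w) = 1 - \<P>(w in M. L w = y \<bar> Q w)"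
  using prob_split_binary[OF assms(1,2,3,5)] assms(4)
  by (simp add: cond_prob_def conj_commute field_simps)

lemma integral_zero_one_loss_distr:
  assumes [measurable]: "X \<in> M \<rightarrow>\<^sub>M N" "L \<in> M \<rightarrow>\<^sub>M count_space UNIV" "f \<in> N \<rightarrow>\<^sub>M count_space UNIV"
  shows "(\<integral>z. zero_one_loss (f (fst z)) (snd z) \<partial>distr M (N \<Otimes>\<^sub>M count_space UNIV) (\<lambda>w. (X w, L w)))
    = \<P>(w in M. f (X w) \<noteq> L w)"
proof -
  have "(\<integral>z. zero_one_loss (f (fst z)) (snd z) \<partial>distr M (N \<Otimes>\<^sub>M count_space UNIV) (\<lambda>w. (X w, L w)))
      = (\<integral>w. zero_one_loss (f (X w)) (L w) \<partial>M)"
    by (simp add: integral_distr)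
  also have "\<dots> = (\<integral>w. indicator {w \<in> space M. f (X w) \<noteq> L w} w \<partial>M)"
    by (intro Bochner_Integration.integral_cong) (auto simp: zero_one_loss_def)
  finally show ?thesis
    by (simp add: Int_absorb2)
qed

lemma risk01_distr:
  assumes [measurable]: "X \<in> M \<rightarrow>\<^sub>M N" "L \<in> M \<rightarrow>\<^sub>M count_space UNIV" "f \<in> N \<rightarrow>\<^sub>M count_space UNIV"
  shows "risk01 (distr M (N \<Otimes>\<^sub>M count_space UNIV) (\<lambda>w. (X w, L w))) f = \<P>(w in M. f (X w) \<noteq> L w)"
  unfolding risk01_def
  by (subst measure_distr)
    (auto simp: space_pair_measure measurable_space[OF assms(1)] intro!: arg_cong[where f = prob])

lemma integral_zero_one_loss_independent_copies:
  assumes [measurable]: "X \<in> M \<rightarrow>\<^sub>M N" "L \<in> M \<rightarrow>\<^sub>M count_space UNIV" "f \<in> N \<rightarrow>\<^sub>M count_space UNIV"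
    and f_binary: "\<forall>w\<in>space M. f (X w) \<in> {-1, 1}"
    and L_binary: "\<forall>w\<in>space M. L w \<in> {-1, 1}"
  defines "D \<equiv> distr M (N \<Otimes>\<^sub>M count_space UNIV) (\<lambda>w. (X w, L w))"
  shows "(\<integral>zz. zero_one_loss (f (fst (fst zz))) (snd (snd zz)) \<partial>(D \<Otimes>\<^sub>M D))
    = \<P>(w in M. f (X w) = 1) * \<P>(w in M. L w = -1) + \<P>(w in M. f (X w) = -1) * \<P>(w in M. L w = 1)"
proof -
  define A where "A u = {w \<in> space M. f (X w) = u}" for u
  define B where "B t = {w \<in> space M. L w = t}" for t
  have events [measurable]: "A u \<in> sets M" "B t \<in> sets M" for u t
    unfolding A_def B_def by measurable
  have "(\<lambda>w. (X w, L w)) \<in> M \<rightarrow>\<^sub>M N \<Otimes>\<^sub>M count_space UNIV"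
    by measurable
  then have D_sigma_finite: "sigma_finite_measure D"
    unfolding D_def by (rule prob_space_imp_sigma_finite[OF prob_space_distr])
  interpret product: pair_prob_space M M ..
  from D_sigma_finite have "D \<Otimes>\<^sub>M D = distr (M \<Otimes>\<^sub>M M) ((N \<Otimes>\<^sub>M count_space UNIV) \<Otimes>\<^sub>M (N \<Otimes>\<^sub>M count_space UNIV))
      (\<lambda>(w, w'). ((X w, L w), (X w', L w')))"
    unfolding D_def by (intro pair_measure_distr) simp_all
  then have "(\<integral>zz. zero_one_loss (f (fst (fst zz))) (snd (snd zz)) \<partial>(D \<Otimes>\<^sub>M D))
      = (\<integral>p. zero_one_loss (f (X (fst p))) (L (snd p)) \<partial>(M \<Otimes>\<^sub>M M))"
    by (simp add: integral_distr case_prod_beta)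
  also have "\<dots> = (\<integral>p. indicator (A 1 \<times> B (-1)) p + indicator (A (-1) \<times> B 1) p \<partial>(M \<Otimes>\<^sub>M M))"
  proof (intro Bochner_Integration.integral_cong refl)
    fix p assume "p \<in> space (M \<Otimes>\<^sub>M M)"
    then have "fst p \<in> space M" "snd p \<in> space M"
      by (auto simp: space_pair_measure)
    with f_binary L_binary show "zero_one_loss (f (X (fst p))) (L (snd p))
        = indicator (A 1 \<times> B (-1)) p + indicator (A (-1) \<times> B 1) p"
      by (cases p) (fastforce simp: zero_one_loss_def indicator_def A_def B_def)
  qed
  also have "\<dots> = measure (M \<Otimes>\<^sub>M M) (A 1 \<times> B (-1)) + measure (M \<Otimes>\<^sub>M M) (A (-1) \<times> B 1)"
  proof -
    have "A u \<times> B t \<in> sets (M \<Otimes>\<^sub>M M)" "A u \<times> B t \<subseteq> space (M \<Otimes>\<^sub>M M)" for u t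
      by (auto simp: space_pair_measure A_def B_def)
    then show ?thesis
      by (subst Bochner_Integration.integral_add)
        (auto simp: Int_absorb2 less_top[symmetric] intro!: integrable_real_indicator)
  qed
  also have "\<dots> = \<P>(w in M. f (X w) = 1) * \<P>(w in M. L w = -1) + \<P>(w in M. f (X w) = -1) * \<P>(w in M. L w = 1)"
  proof -
    have "measure (M \<Otimes>\<^sub>M M) (A u \<times> B t) = prob (A u) * prob (B t)" for u t
      by (intro measure_pair_measure_Times events)
    then show ?thesis
      by (simp only: A_def B_def)
  qed
  finally show ?thesis .
qed

lemma peer_loss_distr:
  assumes "X \<in> M \<rightarrow>\<^sub>M N" "L \<in> M \<rightarrow>\<^sub>M count_space UNIV" "f \<in> N \<rightarrow>\<^sub>M count_space UNIV"
    and "\<forall>w\<in>space M. f (X w) \<in> {-1, 1}" and "\<forall>w\<in>space M. L w \<in> {-1, 1}"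
  shows "peer_loss (distr M (N \<Otimes>\<^sub>M count_space UNIV) (\<lambda>w. (X w, L w))) f
    = \<P>(w in M. f (X w) \<noteq> L w)
      - (\<P>(w in M. f (X w) = 1) * \<P>(w in M. L w = -1) + \<P>(w in M. f (X w) = -1) * \<P>(w in M. L w = 1))"
  unfolding peer_loss_def
  using integral_zero_one_loss_distr[OF assms(1-3)] integral_zero_one_loss_independent_copies[OF assms]
  by simp

end

locale noisy_labels = prob_space M
  for M :: "'s measure" and X :: "'s \<Rightarrow> 'a::topological_space" and Y Yt :: "'s \<Rightarrow> int" +
  assumes measurable_X [measurable]: "X \<in> M \<rightarrow>\<^sub>M borel"
    and measurable_Y [measurable]: "Y \<in> M \<rightarrow>\<^sub>M count_space UNIV"
    and measurable_Yt [measurable]: "Yt \<in> M \<rightarrow>\<^sub>M count_space UNIV"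
    and Y_binary: "\<forall>w\<in>space M. Y w \<in> {-1, 1}"
    and Yt_binary: "\<forall>w\<in>space M. Yt w \<in> {-1, 1}"
    and cond_indep: "cond_indep_label M X Y Yt"

lemma (in noisy_labels) prob_split_label:
  assumes "{w \<in> space M. P w} \<in> events"
  shows "\<P>(w in M. P w) = \<P>(w in M. P w \<and> Y w = 1) + \<P>(w in M. P w \<and> Y w = -1)"
  using prob_split_binary[OF measurable_Y Y_binary assms, of 1] by simp

lemma (in noisy_labels) prob_noisy_label_neg:
  assumes "\<P>(w in M. Y w = -1) \<noteq> 0"
  shows "\<P>(w in M. Yt w = -1) = \<P>(w in M. Y w = 1) * \<P>(w in M. Yt w = -1 \<bar> Y w = 1)
    + \<P>(w in M. Y w = -1) * (1 - \<P>(w in M. Yt w = 1 \<bar> Y w = -1))"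
proof -
  have "\<P>(w in M. Yt w = -1 \<bar> Y w = -1) = 1 - \<P>(w in M. Yt w = 1 \<bar> Y w = -1)"
    using cond_prob_binary_compl[OF measurable_Yt Yt_binary _ assms, of 1] by simp
  then show ?thesis
    using prob_mult_cond_prob[of "\<lambda>w. Yt w = -1" "\<lambda>w. Y w = 1"]
      prob_mult_cond_prob[of "\<lambda>w. Yt w = -1" "\<lambda>w. Y w = -1"]
    by (subst prob_split_label) auto
qed

locale noisy_classifier = noisy_labels M X Y Yt
  for M :: "'s measure" and X :: "'s \<Rightarrow> 'a::topological_space" and Y Yt :: "'s \<Rightarrow> int" +
  fixes f :: "'a \<Rightarrow> int"
  assumes measurable_f [measurable]: "f \<in> borel \<rightarrow>\<^sub>M count_space UNIV"
    and f_binary: "\<forall>w\<in>space M. f (X w) \<in> {-1, 1}"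
begin

lemma prob_prediction_noisy_label_factor:
  "\<P>(w in M. f (X w) = u \<and> Y w = y \<and> Yt w = t)
    = \<P>(w in M. f (X w) = u \<and> Y w = y) * \<P>(w in M. Yt w = t \<bar> Y w = y)"
proof (cases "\<P>(w in M. Y w = y) = 0")
  case True
  have "\<P>(w in M. f (X w) = u \<and> Y w = y \<and> Yt w = t) \<le> \<P>(w in M. Y w = y)"
    by (intro finite_measure_mono) auto
  with True show ?thesis
    by (simp add: cond_prob_def measure_le_0_iff)
next
  case False
  have "f -` {u} \<in> sets borel"
    using measurable_sets[OF measurable_f, of "{u}"] by simp
  from cond_indep[unfolded cond_indep_label_def, rule_format, OF this, of y t]
  have "\<P>(w in M. f (X w) = u \<and> Y w = y \<and> Yt w = t) * \<P>(w in M. Y w = y)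
      = \<P>(w in M. f (X w) = u \<and> Y w = y) * \<P>(w in M. Y w = y \<and> Yt w = t)"
    by simp
  with False show ?thesis
    by (simp add: cond_prob_def conj_commute field_simps)
qed

lemma prob_label_split_prediction:
  assumes "y \<in> {-1, 1}"
  shows "\<P>(w in M. Y w = y) = \<P>(w in M. f (X w) = y \<and> Y w = y) + \<P>(w in M. f (X w) = - y \<and> Y w = y)"
proof -
  have "(\<lambda>w. f (X w)) \<in> M \<rightarrow>\<^sub>M count_space UNIV" and "{w \<in> space M. Y w = y} \<in> events"
    by measurable
  from prob_split_binary[OF this(1) f_binary this(2) assms] show ?thesis
    by (simp add: conj_commute)
qed

lemma prob_misclassification_split:
  "\<P>(w in M. f (X w) \<noteq> Y w) = \<P>(w in M. f (X w) = -1 \<and> Y w = 1) + \<P>(w in M. f (X w) = 1 \<and> Y w = -1)"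
proof -
  have "\<P>(w in M. f (X w) \<noteq> Y w \<and> Y w = y) = \<P>(w in M. f (X w) = - y \<and> Y w = y)"
    if "y \<in> {-1, 1}" for y
    using that by (intro arg_cong[where f = prob]) (use f_binary in auto)
  then show ?thesis
    by (subst prob_split_label) auto
qed

text \<open>Within the class \<open>Y = y\<close> the label is flipped with probability \<open>e\<close> independently of the
  prediction, which makes the disagreement with \<open>Yt\<close> affine in the error on that class.\<close>
lemma prob_disagree_noisy_label_class:
  assumes "y \<in> {-1, 1}" and "\<P>(w in M. Y w = y) \<noteq> 0"
  defines "e \<equiv> \<P>(w in M. Yt w = - y \<bar> Y w = y)"
  shows "\<P>(w in M. f (X w) \<noteq> Yt w \<and> Y w = y)
    = (1 - 2 * e) * \<P>(w in M. f (X w) = - y \<and> Y w = y) + e * \<P>(w in M. Y w = y)"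
proof -
  have "\<P>(w in M. f (X w) \<noteq> Yt w \<and> Y w = y)
      = \<P>(w in M. f (X w) = y \<and> Y w = y \<and> Yt w = - y) + \<P>(w in M. f (X w) = - y \<and> Y w = y \<and> Yt w = y)"
  proof -
    have "{w \<in> space M. f (X w) \<noteq> Yt w \<and> Y w = y}
        = {w \<in> space M. f (X w) = y \<and> Y w = y \<and> Yt w = - y} \<union> {w \<in> space M. f (X w) = - y \<and> Y w = y \<and> Yt w = y}"
      using assms(1) f_binary Yt_binary by fastforce
    moreover have "y \<noteq> - y"
      using assms(1) by auto
    ultimately show ?thesis
      by (auto intro!: finite_measure_Union)
  qed
  moreover have "\<P>(w in M. Y w = y) = \<P>(w in M. f (X w) = y \<and> Y w = y) + \<P>(w in M. f (X w) = - y \<and> Y w = y)"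
    using prob_label_split_prediction[OF assms(1)] .
  moreover have "\<P>(w in M. Yt w = y \<bar> Y w = y) = 1 - e"
    using cond_prob_binary_compl[OF measurable_Yt Yt_binary _ assms(2) assms(1)] unfolding e_def
    by simp
  ultimately show ?thesis
    unfolding prob_prediction_noisy_label_factor e_def by (simp add: algebra_simps)
qed

lemma peer_loss_eq_scaled_risk:
  assumes balanced: "\<P>(w in M. Y w = 1) = 1/2"
  shows "peer_loss (distr M (borel \<Otimes>\<^sub>M count_space UNIV) (\<lambda>w. (X w, Yt w))) f
    = (1 - noise_neg M Y Yt - noise_pos M Y Yt)
      * (risk01 (distr M (borel \<Otimes>\<^sub>M count_space UNIV) (\<lambda>w. (X w, Y w))) f - 1/2)"
proof -
  define e_pos where "e_pos = \<P>(w in M. Yt w = -1 \<bar> Y w = 1)"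
  define e_neg where "e_neg = \<P>(w in M. Yt w = 1 \<bar> Y w = -1)"
  define err_pos where "err_pos = \<P>(w in M. f (X w) = -1 \<and> Y w = 1)"
  define err_neg where "err_neg = \<P>(w in M. f (X w) = 1 \<and> Y w = -1)"
  have measurable_prediction: "(\<lambda>w. f (X w)) \<in> M \<rightarrow>\<^sub>M count_space UNIV"
    by measurable
  have balanced_neg: "\<P>(w in M. Y w = -1) = 1/2"
    using prob_binary_compl[OF measurable_Y Y_binary, of 1] balanced by simp
  have risk: "\<P>(w in M. f (X w) \<noteq> Y w) = err_pos + err_neg"
    unfolding err_pos_def err_neg_def by (rule prob_misclassification_split)
  have disagree: "\<P>(w in M. f (X w) \<noteq> Yt w)
      = (1 - 2 * e_pos) * err_pos + e_pos / 2 + (1 - 2 * e_neg) * err_neg + e_neg / 2"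
    using prob_disagree_noisy_label_class[of 1] prob_disagree_noisy_label_class[of "-1"]
    unfolding e_pos_def e_neg_def err_pos_def err_neg_def
    by (subst prob_split_label) (auto simp: balanced balanced_neg)
  have noisy_neg: "\<P>(w in M. Yt w = -1) = (e_pos + 1 - e_neg) / 2"
    using prob_noisy_label_neg balanced balanced_neg unfolding e_pos_def e_neg_def by simp
  have noisy_pos: "\<P>(w in M. Yt w = 1) = 1 - \<P>(w in M. Yt w = -1)"
    using prob_binary_compl[OF measurable_Yt Yt_binary, of "-1"] by simp
  have predict_pos: "\<P>(w in M. f (X w) = 1) = 1/2 - err_pos + err_neg"
    using prob_label_split_prediction[of 1] balanced
    unfolding err_pos_def err_neg_def by (subst prob_split_label) auto
  have predict_neg: "\<P>(w in M. f (X w) = -1) = 1 - \<P>(w in M. f (X w) = 1)"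
    using prob_binary_compl[OF measurable_prediction f_binary, of "-1"] by simp
  show ?thesis
    unfolding peer_loss_distr[OF measurable_X measurable_Yt measurable_f f_binary Yt_binary]
      risk01_distr[OF measurable_X measurable_Y measurable_f] risk disagree
      noisy_pos noisy_neg predict_neg predict_pos
      noise_pos_eq_cond_prob noise_neg_eq_cond_prob e_pos_def[symmetric] e_neg_def[symmetric]
    by (simp add: field_simps)
qed

end

theorem theorem2:
  fixes M :: "'s measure"
    and X :: "'s \<Rightarrow> real ^ 'd"
    and Y Yt :: "'s \<Rightarrow> int"
    and \<X> :: "(real ^ 'd) set"
    and F :: "(real ^ 'd \<Rightarrow> int) set"
    and ft :: "real ^ 'd \<Rightarrow> int"
  assumes "prob_space M"
    and "X \<in> M \<rightarrow>\<^sub>M borel"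
    and "Y \<in> M \<rightarrow>\<^sub>M count_space UNIV"
    and "Yt \<in> M \<rightarrow>\<^sub>M count_space UNIV"
    and "\<forall>w\<in>space M. X w \<in> \<X> \<and> Y w \<in> {-1, 1} \<and> Yt w \<in> {-1, 1}"
    and "cond_indep_label M X Y Yt"
    and "measure M {w\<in>space M. Y w = 1} = 1/2"
    and "noise_neg M Y Yt + noise_pos M Y Yt < 1"
    and "\<forall>f\<in>F. f \<in> borel \<rightarrow>\<^sub>M count_space UNIV \<and> (\<forall>x\<in>\<X>. f x \<in> {-1, 1})"
    and "ft \<in> F"
    and "\<forall>f\<in>F. peer_loss (distr M (borel \<Otimes>\<^sub>M count_space UNIV) (\<lambda>w. (X w, Yt w))) ft
                \<le> peer_loss (distr M (borel \<Otimes>\<^sub>M count_space UNIV) (\<lambda>w. (X w, Yt w))) f"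
  shows "\<forall>f\<in>F. risk01 (distr M (borel \<Otimes>\<^sub>M count_space UNIV) (\<lambda>w. (X w, Y w))) ft
              \<le> risk01 (distr M (borel \<Otimes>\<^sub>M count_space UNIV) (\<lambda>w. (X w, Y w))) f"
proof
  let ?peer = "peer_loss (distr M (borel \<Otimes>\<^sub>M count_space UNIV) (\<lambda>w. (X w, Yt w)))"
  let ?risk = "risk01 (distr M (borel \<Otimes>\<^sub>M count_space UNIV) (\<lambda>w. (X w, Y w)))"
  let ?c = "1 - noise_neg M Y Yt - noise_pos M Y Yt"
  have labels: "noisy_labels M X Y Yt"
    using assms(1-6) by (auto intro!: noisy_labels.intro noisy_labels_axioms.intro)
  have scaled: "?peer g = ?c * (?risk g - 1/2)" if "g \<in> F" for g
  proof -
    have "noisy_classifier M X Y Yt g"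
      using labels assms(5,9) that by (auto intro!: noisy_classifier.intro noisy_classifier_axioms.intro)
    then show ?thesis
      using assms(7) by (rule noisy_classifier.peer_loss_eq_scaled_risk)
  qed
  fix f assume "f \<in> F"
  with assms(11) have "?peer ft \<le> ?peer f"
    by blast
  then have "?c * (?risk ft - 1/2) \<le> ?c * (?risk f - 1/2)"
    using scaled assms(10) \<open>f \<in> F\<close> by simp
  moreover have "?c > 0"
    using assms(8) by simp
  ultimately show "?risk ft \<le> ?risk f"
    by simp
qed

end
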